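(* Let $k\geq0$, $q\geq1$, $m\ge1$ and $\gamma=(\gamma_1,\ldots,\gamma_m)\in\mathbb{Z}^m$ with $\gamma_1\ge 2$ and $2\le\gamma_{i+1}\le\gamma_i+1$ for all $1\le i<m$. Then $F^{1234}(k,q,\gamma)=F^{2143}(k,q,\gamma)$.
   Context: For $\pi\in\{1234,2143\}$ define successor functions on integer triples. $\mathrm{suc}^{2143}(x,y,z)=\emptyset$ if $z\le0$ and for $z\ge1$, $\mathrm{suc}^{2143}(x,y,z)=\{(2,y{+}1,z),\ldots,(x{+}1,y{+}1,z)\}\cup\{(x,x{+}1,z),\ldots,(x,y,z)\}\cup\mathrm{suc}^{2143}(x,x,z{-}1)$. $\mathrm{suc}^{1234}(x,y,1)=\{(2,y{+}1,1),\ldots,(x{+}1,y{+}1,1)\}\cup\{(x,x{+}1,1),\ldots,(x,y,1)\}$ and for $z\ge2$, $\mathrm{suc}^{1234}(x,y,z)=\{(2,y{+}1,z),\ldots,(x{+}1,y{+}1,z)\}\cup\mathrm{suc}^{1234}(x,y,z{-}1)$ (sets of the form $\{(x,x{+}1,\cdot),\ldots,(x,y,\cdot)\}$ are empty if $y\le x$). A path in $\mathcal{P}^{\pi}$ is a finite sequence $P=(v_1,\ldots,v_r)$, $r\ge1$, of points of $\mathbb{Z}^3$ with $v_1=(x,y,z)$, $2\le x\le y$, $z\ge1$, and $v_{i+1}\in\mathrm{suc}^{\pi}(v_i)$; its length is $\ell(P)=r$. For $P\in\mathcal{P}^{2143}$, an edge from $(x_1,y_1,z_1)$ to $(x_2,y_2,z_2)$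 is recorded if either $z_1=z_2$ and $y_2=y_1+1$, or $z_1>z_2$. For $P\in\mathcal{P}^{1234}$, such an edge is recorded if $y_2=y_1+1$. The signature of $P$ is the tuple of the $x$-coordinate of $v_1$ followed by the $x$-coordinates of the endpoints of the recorded edges, in order. For $k\ge0$, $q\ge1$, $\gamma\in\mathbb{Z}^m$, $m\ge1$, $\mathcal{P}^{\pi}_{k,q,\gamma}$ is the set of paths in $\mathcal{P}^{\pi}$ starting at $(\gamma_1,\gamma_1+k,q)$ with signature $\gamma$, and $F^{\pi}(k,q,\gamma)=\sum_{P\in\mathcal{P}^{\pi}_{k,q,\gamma}}t^{\ell(P)-m}$, a formal power series in $t$. *)

theory Defs
  imports "HOL-Computational_Algebra.Formal_Power_Series"
begin

type_synonym pt = "int \<times> int \<times> int"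

function suc2143 :: "int \<Rightarrow> int \<Rightarrow> int \<Rightarrow> pt set" where
  "suc2143 x y z =
     (if z \<le> 0 then {}
      else {(a, y + 1, z) | a. 2 \<le> a \<and> a \<le> x + 1}
         \<union> {(x, b, z) | b. x + 1 \<le> b \<and> b \<le> y}
         \<union> suc2143 x x (z - 1))"
  by pat_completeness auto
termination by (relation "measure (\<lambda>(x, y, z). nat z)") auto

(* suc^1234 is only specified for z >= 1; we set it to {} for z <= 0 (never reached by paths). *)
function suc1234 :: "int \<Rightarrow> int \<Rightarrow> int \<Rightarrow> pt set" where
  "suc1234 x y z =
     (if z \<le> 0 then {}
      else {(a, y + 1, z) | a. 2 \<le> a \<and> a \<le> x + 1}
         \<union> (if z = 1 then {(x, b, 1) | b. x + 1 \<le> b \<and> b \<le> y}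
            else suc1234 x y (z - 1)))"
  by pat_completeness auto
termination by (relation "measure (\<lambda>(x, y, z). nat z)") auto

definition sucP2143 :: "pt \<Rightarrow> pt set" where
  "sucP2143 v = (case v of (x, y, z) \<Rightarrow> suc2143 x y z)"

definition sucP1234 :: "pt \<Rightarrow> pt set" where
  "sucP1234 v = (case v of (x, y, z) \<Rightarrow> suc1234 x y z)"

definition xc :: "pt \<Rightarrow> int" where "xc v = fst v"
definition yc :: "pt \<Rightarrow> int" where "yc v = fst (snd v)"
definition zc :: "pt \<Rightarrow> int" where "zc v = snd (snd v)"

definition is_path :: "(pt \<Rightarrow> pt set) \<Rightarrow> pt list \<Rightarrow> bool" where
  "is_path sc P \<longleftrightarrow> P \<noteq> [] \<and>
     2 \<le> xc (hd P) \<and> xc (hd P) \<le> yc (hd P) \<and> 1 \<le> zc (hd P) \<and>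
     (\<forall>i. i + 1 < length P \<longrightarrow> P ! (i + 1) \<in> sc (P ! i))"

definition recorded2143 :: "pt \<Rightarrow> pt \<Rightarrow> bool" where
  "recorded2143 v w \<longleftrightarrow>
     (zc v = zc w \<and> yc w = yc v + 1) \<or> zc v > zc w"

definition recorded1234 :: "pt \<Rightarrow> pt \<Rightarrow> bool" where
  "recorded1234 v w \<longleftrightarrow> yc w = yc v + 1"

definition signature :: "(pt \<Rightarrow> pt \<Rightarrow> bool) \<Rightarrow> pt list \<Rightarrow> int list" where
  "signature rec P =
     xc (hd P) # [xc (P ! (i + 1)). i \<leftarrow> [0..<length P - 1], rec (P ! i) (P ! (i + 1))]"

definition Fgen :: "(pt \<Rightarrow> pt set) \<Rightarrow> (pt \<Rightarrow> pt \<Rightarrow> bool) \<Rightarrow> int \<Rightarrow> int \<Rightarrow> int list \<Rightarrow> nat fps" where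
  "Fgen sc rec k q \<gamma> = Abs_fps (\<lambda>n. card {P. is_path sc P \<and>
       hd P = (\<gamma> ! 0, \<gamma> ! 0 + k, q) \<and> signature rec P = \<gamma> \<and>
       length P = n + length \<gamma>})"

definition F1234 :: "int \<Rightarrow> int \<Rightarrow> int list \<Rightarrow> nat fps" where
  "F1234 = Fgen sucP1234 recorded1234"

definition F2143 :: "int \<Rightarrow> int \<Rightarrow> int list \<Rightarrow> nat fps" where
  "F2143 = Fgen sucP2143 recorded2143"

end

theory Submission
  imports Defs
begin

(* Both series count paths by length, so it suffices to show that from every start point (x, y, z)
   with x \<le> y and z \<ge> 1 the two models have, for each remaining signature, equally many paths
   of each length n; call these numbers N_n. Splitting off the first step gives recurrences.
   A recorded 2143 step goes to (a, y + 1, z) or drops to (a, x + 1, z') with z' < z, and the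
   unrecorded steps keep the level z; a recorded 1234 step goes to any (a, y + 1, z') with z' \<le> z,
   and the unrecorded steps reset the level to 1. Matching the two recurrences amounts to a
   telescoping sum over the heights x + 1, ..., y, whose terms are given by the 1234 identity
   N_(n+1) (x, y + 1, z) = N_(n+1) (x, y, z) + N_n (x, y + 1, z + 1). *)

lemma successively_iff_nth:
  "successively R xs \<longleftrightarrow> (\<forall>i. i + 1 < length xs \<longrightarrow> R (xs ! i) (xs ! (i + 1)))"
proof (induction R xs rule: successively.induct)
  case (3 R v w xs)
  show ?case
    unfolding successively.simps 3 by (auto simp: nth_Cons split: nat.splits)
qed auto

lemma sum_int_cl_ivl_last: "a \<le> b \<Longrightarrow> sum f {a..b} = sum f {a..b - 1} + f (b :: int)"
  by (simp add: atLeastAtMostPlus1_int_conv[of a "b - 1", simplified] add.commute)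

lemma sum_int_cl_ivl_first: "a \<le> b \<Longrightarrow> sum f {a..b} = f a + sum f {a + 1..b :: int}"
proof -
  assume "a \<le> b"
  then have "{a..b} = insert a {a + 1..b}"
    by auto
  then show ?thesis
    by simp
qed

lemma sum_int_cl_ivl_shift: "(\<Sum>i\<in>{a..b}. f (i + 1)) = (\<Sum>i\<in>{a + 1..b + 1 :: int}. f i)"
  using sum.reindex[of "\<lambda>i. i + 1" "{a..b}" f] by (simp add: inj_on_def)

fun signature_tail :: "(pt \<Rightarrow> pt \<Rightarrow> bool) \<Rightarrow> pt list \<Rightarrow> int list" where
  "signature_tail rc (v # w # P) = (if rc v w then [xc w] else []) @ signature_tail rc (w # P)"
| "signature_tail rc _ = []"

lemma signature_conv_signature_tail: "signature rc P = xc (hd P) # signature_tail rc P"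
proof (induction rc P rule: signature_tail.induct)
  case (1 rc v w P)
  have "length (v # w # P) - 1 = Suc (length (w # P) - 1)"
    by simp
  then show ?case
    using 1 unfolding signature_def by (simp only: map_upt_Suc concat.simps) (simp cong: if_cong)
qed (auto simp: signature_def)

definition walks :: "(pt \<Rightarrow> pt set) \<Rightarrow> pt \<Rightarrow> nat \<Rightarrow> pt list set" where
  "walks sc v n = {P. successively (\<lambda>u w. w \<in> sc u) P \<and> P \<noteq> [] \<and> hd P = v \<and> length P = n}"

lemma walks_0 [simp]: "walks sc v 0 = {}"
  by (simp add: walks_def)

lemma walks_Suc:
  "walks sc v (Suc n) = (if n = 0 then {[v]} else {}) \<union> (\<Union>w\<in>sc v. Cons v ` walks sc w n)"
proof (intro equalityI subsetI)
  fix P assume "P \<in> walks sc v (Suc n)"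
  then obtain Q where P: "P = v # Q" "successively (\<lambda>u w. w \<in> sc u) P" "length Q = n"
    by (cases P) (auto simp: walks_def)
  show "P \<in> (if n = 0 then {[v]} else {}) \<union> (\<Union>w\<in>sc v. Cons v ` walks sc w n)"
  proof (cases Q)
    case (Cons w R)
    then have "w \<in> sc v" "Q \<in> walks sc w n"
      using P by (auto simp: walks_def)
    then show ?thesis
      using P by blast
  qed (use P in simp)
qed (auto simp: walks_def successively_Cons split: if_splits)

lemma finite_walks:
  assumes "\<And>u. finite (sc u)"
  shows "finite (walks sc v n)"
  using assms by (induction n arbitrary: v) (auto simp: walks_Suc)

definition path_count ::
    "(pt \<Rightarrow> pt set) \<Rightarrow> (pt \<Rightarrow> pt \<Rightarrow> bool) \<Rightarrow> pt \<Rightarrow> int list \<Rightarrow> nat \<Rightarrow> nat" where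
  "path_count sc rc v g n = card {P \<in> walks sc v n. signature_tail rc P = g}"

lemma path_count_0 [simp]: "path_count sc rc v g 0 = 0"
  by (simp add: path_count_def)

lemma path_count_Suc:
  assumes fin: "\<And>u. finite (sc u)"
  shows "path_count sc rc v g (Suc n) = (if n = 0 \<and> g = [] then 1 else 0) +
    (\<Sum>w\<in>sc v.
      card {Q \<in> walks sc w n. (if rc v w then [xc w] else []) @ signature_tail rc Q = g})"
proof -
  define S where
    "S w = {Q \<in> walks sc w n. (if rc v w then [xc w] else []) @ signature_tail rc Q = g}" for w
  have signature_tail_Cons:
    "signature_tail rc (v # Q) = (if rc v w then [xc w] else []) @ signature_tail rc Q"
    if "Q \<in> walks sc w n" for Q w
    using that by (cases Q) (auto simp: walks_def)
  have finite_S: "finite (S w)" for w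
    using finite_walks[OF fin] by (simp add: S_def)
  have nonempty_S: "[] \<notin> S w" and hd_S: "Q \<in> S w \<Longrightarrow> hd Q = w" for w Q
    by (auto simp: S_def walks_def)
  have disjoint: "Cons v ` S w \<inter> Cons v ` S w' = {}" if "w \<noteq> w'" for w w'
    using that by (fastforce dest: hd_S)
  have "{P \<in> walks sc v (Suc n). signature_tail rc P = g}
      = (if n = 0 \<and> g = [] then {[v]} else {}) \<union> (\<Union>w\<in>sc v. Cons v ` S w)"
    unfolding walks_Suc S_def by (auto simp: signature_tail_Cons)
  then have "path_count sc rc v g (Suc n)
      = card ((if n = 0 \<and> g = [] then {[v]} else {}) \<union> (\<Union>w\<in>sc v. Cons v ` S w))"
    by (simp add: path_count_def)
  also have "\<dots> = card (if n = 0 \<and> g = [] then {[v]} else {}) + card (\<Union>w\<in>sc v. Cons v ` S w)"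
    using finite_S fin nonempty_S by (intro card_Un_disjoint) auto
  also have "card (\<Union>w\<in>sc v. Cons v ` S w) = (\<Sum>w\<in>sc v. card (Cons v ` S w))"
    using fin finite_S disjoint by (intro card_UN_disjoint) auto
  also have "\<dots> = (\<Sum>w\<in>sc v. card (S w))"
    by (simp add: card_image)
  finally show ?thesis
    by (simp add: S_def)
qed

lemma path_count_Suc_Nil:
  assumes "\<And>u. finite (sc u)"
  shows "path_count sc rc v [] (Suc n)
    = (if n = 0 then 1 else 0) + (\<Sum>w\<in>{w \<in> sc v. \<not> rc v w}. path_count sc rc w [] n)"
proof -
  have "card {Q \<in> walks sc w n. (if rc v w then [xc w] else []) @ signature_tail rc Q = []}
      = (if \<not> rc v w then path_count sc rc w [] n else 0)" for w
    by (simp add: path_count_def)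
  then show ?thesis
    using assms by (simp add: path_count_Suc sum.inter_filter)
qed

lemma path_count_Suc_Cons:
  assumes "\<And>u. finite (sc u)"
  shows "path_count sc rc v (a # g) (Suc n)
    = (\<Sum>w\<in>{w \<in> sc v. rc v w \<and> xc w = a}. path_count sc rc w g n)
      + (\<Sum>w\<in>{w \<in> sc v. \<not> rc v w}. path_count sc rc w (a # g) n)"
proof -
  have "card {Q \<in> walks sc w n. (if rc v w then [xc w] else []) @ signature_tail rc Q = a # g}
      = (if rc v w \<and> xc w = a then path_count sc rc w g n else 0)
        + (if \<not> rc v w then path_count sc rc w (a # g) n else 0)" for w
    by (auto simp: path_count_def)
  then show ?thesis
    using assms by (simp add: path_count_Suc sum.inter_filter sum.distrib)
qed

lemma Fgen_eq_path_count:
  assumes "0 \<le> k" "1 \<le> q" "2 \<le> a"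
  shows "Fgen sc rc k q (a # g)
    = Abs_fps (\<lambda>n. path_count sc rc (a, a + k, q) g (n + Suc (length g)))"
proof -
  have "{P. is_path sc P \<and> hd P = (a, a + k, q) \<and> signature rc P = a # g \<and> length P = L}
      = {P \<in> walks sc (a, a + k, q) L. signature_tail rc P = g}" for L
    using assms
    by (auto simp: is_path_def walks_def signature_conv_signature_tail successively_iff_nth
        xc_def yc_def zc_def)
  then show ?thesis
    by (simp add: Fgen_def path_count_def)
qed

declare suc1234.simps [simp del] suc2143.simps [simp del]

lemma suc1234_eq:
  "1 \<le> z \<Longrightarrow> suc1234 x y z
    = (\<lambda>(a, z'). (a, y + 1, z')) ` ({2..x + 1} \<times> {1..z}) \<union> (\<lambda>b. (x, b, 1)) ` {x + 1..y}"
proof (induction x y z rule: suc1234.induct)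
  case (1 x y z)
  show ?case
  proof (cases "z = 1")
    case True
    then show ?thesis
      by (subst suc1234.simps) auto
  next
    case False
    then have "suc1234 x y z = {(a, y + 1, z) | a. 2 \<le> a \<and> a \<le> x + 1} \<union> suc1234 x y (z - 1)"
      using "1.prems" by (subst suc1234.simps) simp
    with 1 False show ?thesis
      by auto
  qed
qed

lemma suc2143_eq:
  "1 \<le> z \<Longrightarrow> suc2143 x y z
    = (\<lambda>a. (a, y + 1, z)) ` {2..x + 1} \<union> (\<lambda>b. (x, b, z)) ` {x + 1..y}
      \<union> (\<lambda>(a, z'). (a, x + 1, z')) ` ({2..x + 1} \<times> {1..z - 1})"
proof (induction x y z rule: suc2143.induct)
  case (1 x y z)
  have "suc2143 x y z = {(a, y + 1, z) | a. 2 \<le> a \<and> a \<le> x + 1}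
      \<union> {(x, b, z) | b. x + 1 \<le> b \<and> b \<le> y} \<union> suc2143 x x (z - 1)"
    using "1.prems" by (subst suc2143.simps) simp
  moreover have "suc2143 x x (z - 1) = (\<lambda>(a, z'). (a, x + 1, z')) ` ({2..x + 1} \<times> {1..z - 1})"
  proof (cases "z = 1")
    case True
    then show ?thesis
      by (subst suc2143.simps) simp
  next
    case False
    with 1 show ?thesis
      by (auto simp: image_iff)
  qed
  ultimately show ?case
    by auto
qed

lemma finite_sucP1234: "finite (sucP1234 u)"
proof (cases u)
  case (fields x y z)
  then show ?thesis
    by (cases "1 \<le> z") (simp_all add: sucP1234_def suc1234_eq, simp add: suc1234.simps)
qed

lemma finite_sucP2143: "finite (sucP2143 u)"
proof (cases u)
  case (fields x y z)
  then show ?thesis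
    by (cases "1 \<le> z") (simp_all add: sucP2143_def suc2143_eq, simp add: suc2143.simps)
qed

abbreviation count1234 :: "pt \<Rightarrow> int list \<Rightarrow> nat \<Rightarrow> nat" where
  "count1234 \<equiv> path_count sucP1234 recorded1234"

abbreviation count2143 :: "pt \<Rightarrow> int list \<Rightarrow> nat \<Rightarrow> nat" where
  "count2143 \<equiv> path_count sucP2143 recorded2143"

lemma unrecorded_sucP1234:
  "1 \<le> z \<Longrightarrow>
    {w \<in> sucP1234 (x, y, z). \<not> recorded1234 (x, y, z) w} = (\<lambda>b. (x, b, 1)) ` {x + 1..y}"
  by (auto simp: sucP1234_def suc1234_eq recorded1234_def yc_def)

lemma recorded_sucP1234:
  "1 \<le> z \<Longrightarrow> {w \<in> sucP1234 (x, y, z). recorded1234 (x, y, z) w \<and> xc w = a}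
    = (if 2 \<le> a \<and> a \<le> x + 1 then (\<lambda>z'. (a, y + 1, z')) ` {1..z} else {})"
  by (auto simp: sucP1234_def suc1234_eq recorded1234_def xc_def yc_def)

lemma unrecorded_sucP2143:
  "1 \<le> z \<Longrightarrow>
    {w \<in> sucP2143 (x, y, z). \<not> recorded2143 (x, y, z) w} = (\<lambda>b. (x, b, z)) ` {x + 1..y}"
  by (auto simp: sucP2143_def suc2143_eq recorded2143_def yc_def zc_def)

lemma recorded_sucP2143:
  "1 \<le> z \<Longrightarrow> {w \<in> sucP2143 (x, y, z). recorded2143 (x, y, z) w \<and> xc w = a}
    = (if 2 \<le> a \<and> a \<le> x + 1
       then insert (a, y + 1, z) ((\<lambda>z'. (a, x + 1, z')) ` {1..z - 1}) else {})"
  by (auto simp: sucP2143_def suc2143_eq recorded2143_def xc_def yc_def zc_def)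

lemma count1234_Suc_Nil:
  "1 \<le> z \<Longrightarrow> count1234 (x, y, z) [] (Suc n)
    = (if n = 0 then 1 else 0) + (\<Sum>b\<in>{x + 1..y}. count1234 (x, b, 1) [] n)"
  by (simp add: path_count_Suc_Nil[OF finite_sucP1234] unrecorded_sucP1234 sum.reindex inj_on_def)

lemma count1234_Suc_Cons:
  "1 \<le> z \<Longrightarrow> count1234 (x, y, z) (a # g) (Suc n)
    = (if 2 \<le> a \<and> a \<le> x + 1 then \<Sum>z'\<in>{1..z}. count1234 (a, y + 1, z') g n else 0)
      + (\<Sum>b\<in>{x + 1..y}. count1234 (x, b, 1) (a # g) n)"
  by (simp add: path_count_Suc_Cons[OF finite_sucP1234] recorded_sucP1234 unrecorded_sucP1234
      sum.reindex inj_on_def)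

lemma count2143_Suc_Nil:
  "1 \<le> z \<Longrightarrow> count2143 (x, y, z) [] (Suc n)
    = (if n = 0 then 1 else 0) + (\<Sum>b\<in>{x + 1..y}. count2143 (x, b, z) [] n)"
  by (simp add: path_count_Suc_Nil[OF finite_sucP2143] unrecorded_sucP2143 sum.reindex inj_on_def)

lemma count2143_Suc_Cons:
  "1 \<le> z \<Longrightarrow> count2143 (x, y, z) (a # g) (Suc n)
    = (if 2 \<le> a \<and> a \<le> x + 1
       then count2143 (a, y + 1, z) g n + (\<Sum>z'\<in>{1..z - 1}. count2143 (a, x + 1, z') g n) else 0)
      + (\<Sum>b\<in>{x + 1..y}. count2143 (x, b, z) (a # g) n)"
  by (simp add: path_count_Suc_Cons[OF finite_sucP2143] recorded_sucP2143 unrecorded_sucP2143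
      sum.reindex inj_on_def image_iff)

lemma count1234_level_indep:
  assumes "1 \<le> z" and "\<forall>a g'. g = a # g' \<longrightarrow> \<not> (2 \<le> a \<and> a \<le> x + 1)"
  shows "count1234 (x, y, z) g n = count1234 (x, y, 1) g n"
  using assms by (cases n; cases g) (auto simp: count1234_Suc_Nil count1234_Suc_Cons)

lemma count1234_level_Cons:
  "1 \<le> z \<Longrightarrow> count1234 (x, y, z) (a # g) (Suc n) = count1234 (x, y, 1) (a # g) (Suc n)
    + (if 2 \<le> a \<and> a \<le> x + 1 then \<Sum>z'\<in>{2..z}. count1234 (a, y + 1, z') g n else 0)"
  by (simp add: count1234_Suc_Cons sum_int_cl_ivl_first[of 1 z])

lemma count1234_y_step:
  "x \<le> y \<Longrightarrow> 1 \<le> z \<Longrightarrow> count1234 (x, y + 1, z) g (Suc n)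
    = count1234 (x, y, z) g (Suc n) + count1234 (x, y + 1, z + 1) g n"
proof (induction g arbitrary: x y z n)
  case Nil
  then show ?case
    using count1234_level_indep[of "z + 1" "[]" x "y + 1" n]
    by (simp add: count1234_Suc_Nil sum_int_cl_ivl_last[of "x + 1" "y + 1"])
next
  case (Cons a g)
  show ?case
  proof (cases n)
    case 0
    with Cons.prems show ?thesis
      by (simp add: count1234_Suc_Cons)
  next
    case (Suc m)
    have IH: "count1234 (a, y + 1 + 1, z') g (Suc m)
        = count1234 (a, y + 1, z') g (Suc m) + count1234 (a, y + 1 + 1, z' + 1) g m"
      if "2 \<le> a" "a \<le> x + 1" "1 \<le> z'" for z'
      using Cons.IH[of a "y + 1" z' m] that Cons.prems by (simp add: ac_simps)
    have "(\<Sum>z'\<in>{1..z}. count1234 (a, y + 1 + 1, z') g (Suc m))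
        = (\<Sum>z'\<in>{1..z}. count1234 (a, y + 1, z') g (Suc m))
          + (\<Sum>z'\<in>{2..z + 1}. count1234 (a, y + 1 + 1, z') g m)"
      if "2 \<le> a" "a \<le> x + 1"
      using IH that sum_int_cl_ivl_shift[of "\<lambda>z'. count1234 (a, y + 1 + 1, z') g m" 1 z]
      by (simp add: sum.distrib)
    then show ?thesis
      using Cons.prems count1234_level_Cons[of "z + 1" x "y + 1" a g m]
      by (simp add: Suc count1234_Suc_Cons[of z] sum_int_cl_ivl_last[of "x + 1" "y + 1"])
  qed
qed

lemma count1234_telescope_step:
  assumes "2 \<le> a" "a \<le> x + 1" "x \<le> y" "1 \<le> z"
  shows "count1234 (x, y + 1, z) (a # g) n + (\<Sum>z'\<in>{1..z - 1}. count1234 (a, y + 1, z') g n)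
    = count1234 (x, y + 1, 1) (a # g) n + (\<Sum>z'\<in>{1..z - 1}. count1234 (a, y + 1 + 1, z') g n)"
proof (cases n)
  case (Suc m)
  have "(\<Sum>z'\<in>{1..z - 1}. count1234 (a, y + 1 + 1, z') g (Suc m))
      = (\<Sum>z'\<in>{1..z - 1}. count1234 (a, y + 1, z') g (Suc m))
        + (\<Sum>z'\<in>{1..z - 1}. count1234 (a, y + 1 + 1, z' + 1) g m)"
    unfolding sum.distrib[symmetric]
    using assms by (intro sum.cong refl count1234_y_step) auto
  also have "(\<Sum>z'\<in>{1..z - 1}. count1234 (a, y + 1 + 1, z' + 1) g m)
      = (\<Sum>z'\<in>{2..z}. count1234 (a, y + 1 + 1, z') g m)"
    using sum_int_cl_ivl_shift[of "\<lambda>z'. count1234 (a, y + 1 + 1, z') g m" 1 "z - 1"] by simp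
  finally show ?thesis
    using assms count1234_level_Cons[of z x "y + 1" a g m] by (simp add: Suc)
qed simp

lemma count1234_telescope:
  assumes "2 \<le> a" "a \<le> x + 1" "x \<le> y" "1 \<le> z"
  shows "(\<Sum>b\<in>{x + 1..y}. count1234 (x, b, z) (a # g) n)
      + (\<Sum>z'\<in>{1..z - 1}. count1234 (a, x + 1, z') g n)
    = (\<Sum>b\<in>{x + 1..y}. count1234 (x, b, 1) (a # g) n)
      + (\<Sum>z'\<in>{1..z - 1}. count1234 (a, y + 1, z') g n)"
  using \<open>x \<le> y\<close>
proof (induction y rule: int_ge_induct)
  case (step y)
  then show ?case
    using count1234_telescope_step[OF assms(1,2) step.hyps assms(4), of g n]
    by (simp add: sum_int_cl_ivl_last[of "x + 1" "y + 1"])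
qed simp

lemma count1234_eq_count2143:
  "x \<le> y \<Longrightarrow> 1 \<le> z \<Longrightarrow> count1234 (x, y, z) g n = count2143 (x, y, z) g n"
proof (induction n arbitrary: x y z g)
  case (Suc n)
  have IH: "count2143 (x', y', z') h n = count1234 (x', y', z') h n"
    if "x' \<le> y'" "1 \<le> z'" for x' y' z' h
    using Suc.IH that by simp
  show ?case
  proof (cases g)
    case Nil
    then show ?thesis
      using Suc.prems count1234_level_indep[of z "[]" x _ n]
      by (simp add: count1234_Suc_Nil count2143_Suc_Nil IH)
  next
    case (Cons a g')
    show ?thesis
    proof (cases "2 \<le> a \<and> a \<le> x + 1")
      case True
      then show ?thesis
        using Suc.prems count1234_telescope[of a x y z g' n]
        by (simp add: Cons count1234_Suc_Cons count2143_Suc_Cons IH sum_int_cl_ivl_last[of 1 z])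
    next
      case False
      then show ?thesis
        using Suc.prems count1234_level_indep[of z "a # g'" x _ n]
        by (auto simp: Cons count1234_Suc_Cons count2143_Suc_Cons IH)
    qed
  qed
qed simp

theorem lemma3p6:
  fixes k q :: int and \<gamma> :: "int list"
  assumes "k \<ge> 0" and "q \<ge> 1" and "length \<gamma> \<ge> 1"
    and "\<gamma> ! 0 \<ge> 2"
    and "\<forall>i. i + 1 < length \<gamma> \<longrightarrow> 2 \<le> \<gamma> ! (i + 1) \<and> \<gamma> ! (i + 1) \<le> \<gamma> ! i + 1"
  shows "F1234 k q \<gamma> = F2143 k q \<gamma>"
proof -
  (* The constraint on the later entries of \<gamma> is not needed: the counts agree for every signature. *)
  obtain a g where \<gamma>: "\<gamma> = a # g"
    using assms(3) by (cases \<gamma>) auto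
  have "count1234 (a, a + k, q) g n = count2143 (a, a + k, q) g n" for n
    using assms \<gamma> by (intro count1234_eq_count2143) auto
  then show ?thesis
    using assms by (simp add: \<gamma> F1234_def F2143_def Fgen_eq_path_count)
qed

end
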